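(* Let $G\cong C_{n_1}\oplus\cdots\oplus C_{n_r}$ with $|G|\ge3$ and $1<n_1\mid\cdots\mid n_r$. Then \[[1,n_r-2]\cup\Big[1,-1+\sum_{i=1}^r\Big\lfloor\frac{n_i}{2}\Big\rfloor\Big]\subset\Delta(G).\]
   Context: Intervals are sets of integers: $[a,b]=\{z\in\mathbb{Z}: a\le z\le b\}$. For $A\subset\mathbb{Z}$, $\Delta(A)$ is the set of $d\in\mathbb{N}$ such that there is $l\in A$ with $A\cap[l,l+d]=\{l,l+d\}$. For a finite abelian group $G$, $\mathcal{B}(G)$ is the monoid of zero-sum sequences over $G$ (elements of the free abelian monoid on $G$ whose terms sum to $0$), its atoms are minimal zero-sum sequences, $\mathsf{L}(B)$ is the set of lengths of factorizations of $B$ into atoms, and $\Delta(G)=\bigcup_{B\in\mathcal{B}(G)}\Delta(\mathsf{L}(B))$. *)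

theory Defs
  imports "HOL-Library.Multiset"
begin

text \<open>The group G = C_{n_1} + ... + C_{n_r}, given by the list ns = [n_1,...,n_r].
  Elements are lists g of length r with 0 <= g!i < n_i; addition is componentwise mod n_i.\<close>

definition Gcar :: "nat list \<Rightarrow> nat list set" where
  "Gcar ns = {g. length g = length ns \<and> (\<forall>i<length ns. g ! i < ns ! i)}"

definition zero_sum :: "nat list \<Rightarrow> nat list multiset \<Rightarrow> bool" where
  "zero_sum ns B \<longleftrightarrow> set_mset B \<subseteq> Gcar ns \<and>
     (\<forall>i<length ns. (\<Sum>x\<in>#B. x ! i) mod (ns ! i) = 0)"

definition atom :: "nat list \<Rightarrow> nat list multiset \<Rightarrow> bool" where
  "atom ns A \<longleftrightarrow> zero_sum ns A \<and> A \<noteq> {#} \<and>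
     (\<forall>C. C \<subseteq># A \<and> C \<noteq> {#} \<and> zero_sum ns C \<longrightarrow> C = A)"

definition Lset :: "nat list \<Rightarrow> nat list multiset \<Rightarrow> nat set" where
  "Lset ns B = {size F | F :: nat list multiset multiset.
       (\<forall>A\<in>#F. atom ns A) \<and> sum_mset F = B}"

text \<open>Set of distances of a set of integers (here lengths, so natural numbers).\<close>
definition delta_set :: "nat set \<Rightarrow> nat set" where
  "delta_set L = {d. d > 0 \<and> (\<exists>l\<in>L. l + d \<in> L \<and> (\<forall>k. l < k \<and> k < l + d \<longrightarrow> k \<notin> L))}"

definition DeltaG :: "nat list \<Rightarrow> nat set" where
  "DeltaG ns = (\<Union>B\<in>{B. zero_sum ns B}. delta_set (Lset ns B))"

end

theory Submission
  imports Defs "HOL-Library.Disjoint_Sets"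
begin

text \<open>
  Every distance in the statement is realised by an explicit zero-sum sequence whose set of
  lengths is {2, d + 2}. To compute sets of lengths, the terms of a sequence are indexed by
  labels, so that factorizations become partitions of the label set into minimal zero-sum blocks.

  For 2 \<le> m < n = n_r, let e generate the last summand. The sequence e^n (-e)^m (me) factors
  as (e^n)((me)(-e)^m) or as (e^(n-m) (me)) times m copies of e(-e), and in no other way.

  For 2 \<le> K \<le> \<Sum> \<lfloor>n_i/2\<rfloor>, choose unit vectors f_1, ..., f_K using coordinate i at most
  \<lfloor>n_i/2\<rfloor> times, and put g = f_1 + ... + f_K. The bound forces every atom of
  f_1 ... f_K (-f_1) ... (-f_K) g (-g) that contains exactly one of g, -g to contain exactly one
  of f_t, -f_t for every t. Hence the only factorizations are ((-g) f_1 ... f_K)(g (-f_1) ... (-f_K))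
  and (g(-g)) times the K atoms f_t(-f_t).
\<close>

section \<open>Factorizations of labelled sequences\<close>

definition zero_sum_on :: "nat list \<Rightarrow> ('a \<Rightarrow> nat list) \<Rightarrow> 'a set \<Rightarrow> bool" where
  "zero_sum_on ns v Q \<longleftrightarrow> v ` Q \<subseteq> Gcar ns \<and> (\<forall>i<length ns. (\<Sum>l\<in>Q. v l ! i) mod ns ! i = 0)"

definition minimal_zero_sum_on :: "nat list \<Rightarrow> ('a \<Rightarrow> nat list) \<Rightarrow> 'a set \<Rightarrow> bool" where
  "minimal_zero_sum_on ns v Q \<longleftrightarrow> finite Q \<and> Q \<noteq> {} \<and> zero_sum_on ns v Q \<and>
     (\<forall>Q'. Q' \<subseteq> Q \<and> Q' \<noteq> {} \<and> zero_sum_on ns v Q' \<longrightarrow> Q' = Q)"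

definition atom_partitions :: "nat list \<Rightarrow> ('a \<Rightarrow> nat list) \<Rightarrow> 'a set \<Rightarrow> 'a set set set" where
  "atom_partitions ns v S = {P. partition_on S P \<and> (\<forall>Q\<in>P. minimal_zero_sum_on ns v Q)}"

lemma minimal_zero_sum_onI:
  assumes "finite Q" "Q \<noteq> {}" "zero_sum_on ns v Q"
    and "\<And>Q'. Q' \<subseteq> Q \<Longrightarrow> Q' \<noteq> {} \<Longrightarrow> zero_sum_on ns v Q' \<Longrightarrow> Q \<subseteq> Q'"
  shows "minimal_zero_sum_on ns v Q"
  using assms unfolding minimal_zero_sum_on_def by blast

lemma minimal_zero_sum_onD:
  assumes "minimal_zero_sum_on ns v Q"
  shows "finite Q" "Q \<noteq> {}" "zero_sum_on ns v Q"
    and "\<And>Q'. Q' \<subseteq> Q \<Longrightarrow> Q' \<noteq> {} \<Longrightarrow> zero_sum_on ns v Q' \<Longrightarrow> Q' = Q"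
  using assms unfolding minimal_zero_sum_on_def by blast+

lemma zero_sum_image_mset_set_iff:
  "finite Q \<Longrightarrow> zero_sum ns (image_mset v (mset_set Q)) \<longleftrightarrow> zero_sum_on ns v Q"
  unfolding zero_sum_def zero_sum_on_def by (simp add: sum_unfold_sum_mset multiset.map_comp o_def)

lemma mset_set_eq_plusD:
  assumes "mset_set S = M + N" and "finite S"
  shows "M = mset_set (set_mset M)" "N = mset_set (set_mset N)"
    and "S = set_mset M \<union> set_mset N" "set_mset M \<inter> set_mset N = {}"
proof -
  have count: "count M x + count N x = (if x \<in> S then 1 else 0)" for x
    using arg_cong[OF assms(1), of "\<lambda>A. count A x"] assms(2) by (auto simp: count_mset_set')
  have set_mset: "A = mset_set (set_mset A)" if "\<And>x. count A x \<le> 1" for A :: "'a multiset"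
  proof (rule multiset_eqI)
    fix x
    show "count A x = count (mset_set (set_mset A)) x"
      using that[of x] by (cases "x \<in># A") (auto simp: le_Suc_eq count_eq_zero_iff)
  qed
  have "count M x \<le> 1" "count N x \<le> 1" for x
    using count[of x] by (auto split: if_splits)
  then show "M = mset_set (set_mset M)" "N = mset_set (set_mset N)"
    by (simp_all only: set_mset[symmetric])
  show "S = set_mset M \<union> set_mset N"
    using arg_cong[OF assms(1), of set_mset] assms(2) by simp
  have "count M x = 0 \<or> count N x = 0" for x
    using count[of x] by (simp only: split: if_splits; linarith)
  then show "set_mset M \<inter> set_mset N = {}"
    by (auto simp flip: not_in_iff)
qed

lemma minimal_zero_sum_on_if_atom:
  assumes "finite Q" and atom: "atom ns (image_mset v (mset_set Q))"
  shows "minimal_zero_sum_on ns v Q"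
proof -
  have "Q \<subseteq> Q'" if "Q' \<subseteq> Q" "Q' \<noteq> {}" "zero_sum_on ns v Q'" for Q'
  proof -
    have fin: "finite Q'" using that(1) assms(1) by (rule finite_subset)
    have "image_mset v (mset_set Q') \<subseteq># image_mset v (mset_set Q)"
      by (intro image_mset_subseteq_mono subset_imp_msubset_mset_set that(1) assms(1))
    moreover have "image_mset v (mset_set Q') \<noteq> {#}"
      using fin that(2) by (simp add: mset_set_empty_iff)
    moreover have "zero_sum ns (image_mset v (mset_set Q'))"
      using fin that(3) by (simp add: zero_sum_image_mset_set_iff)
    ultimately have "image_mset v (mset_set Q') = image_mset v (mset_set Q)"
      using atom unfolding atom_def by blast
    then have "card Q' = card Q"
      by (metis size_image_mset size_mset_set)
    then show "Q \<subseteq> Q'" using card_subset_eq[OF assms(1) that(1)] by simp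
  qed
  moreover have "Q \<noteq> {}" "zero_sum_on ns v Q"
    using assms by (auto simp: atom_def zero_sum_image_mset_set_iff)
  ultimately show ?thesis
    using assms(1) minimal_zero_sum_onI by blast
qed

lemma atom_if_minimal_zero_sum_on:
  assumes "finite Q" and minimal: "minimal_zero_sum_on ns v Q"
  shows "atom ns (image_mset v (mset_set Q))"
proof -
  have "C = image_mset v (mset_set Q)"
    if sub: "C \<subseteq># image_mset v (mset_set Q)" and ne: "C \<noteq> {#}" and zs: "zero_sum ns C" for C
  proof -
    obtain D where "image_mset v (mset_set Q) = C + D"
      using sub unfolding mset_subset_eq_exists_conv by blast
    then obtain C' D' where split: "mset_set Q = C' + D'" "C = image_mset v C'"
      using image_mset_eq_plusD by blast
    note C' = mset_set_eq_plusD[OF split(1) assms(1)]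
    have "zero_sum_on ns v (set_mset C')"
      using zs C'(1) split(2) zero_sum_image_mset_set_iff[of "set_mset C'" ns v] by simp
    moreover have "set_mset C' \<subseteq> Q" "set_mset C' \<noteq> {}"
      using ne split(2) C'(3) by auto
    ultimately have "set_mset C' = Q"
      using minimal_zero_sum_onD(4)[OF minimal] by blast
    then show ?thesis using C'(1) split(2) by simp
  qed
  moreover have "image_mset v (mset_set Q) \<noteq> {#}"
    using minimal_zero_sum_onD(1,2)[OF minimal] by (simp add: mset_set_empty_iff)
  moreover have "zero_sum ns (image_mset v (mset_set Q))"
    using minimal_zero_sum_onD(3)[OF minimal] assms(1) by (simp add: zero_sum_image_mset_set_iff)
  ultimately show ?thesis
    unfolding atom_def by blast
qed

lemma atom_image_mset_set_iff:
  "finite Q \<Longrightarrow> atom ns (image_mset v (mset_set Q)) \<longleftrightarrow> minimal_zero_sum_on ns v Q"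
  using minimal_zero_sum_on_if_atom atom_if_minimal_zero_sum_on by blast

lemma factorization_imp_atom_partition:
  assumes "\<forall>A\<in>#F. atom ns A" and "sum_mset F = image_mset v (mset_set S)" and "finite S"
  shows "size F \<in> card ` atom_partitions ns v S"
  using assms
proof (induction F arbitrary: S)
  case empty
  then have "S = {}" by (simp add: mset_set_empty_iff)
  then show ?case by (simp add: atom_partitions_def partition_on_empty image_iff)
next
  case (add A F)
  obtain M N where split: "mset_set S = M + N" "A = image_mset v M" "sum_mset F = image_mset v N"
    using image_mset_eq_plusD[of v "mset_set S" A "sum_mset F"] add.prems(2) by auto
  note MN = mset_set_eq_plusD[OF split(1) add.prems(3)]
  obtain P where P: "P \<in> atom_partitions ns v (set_mset N)" "card P = size F"
    using add.IH[of "set_mset N"] add.prems(1) split(3) MN(2) by auto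
  have minimal: "minimal_zero_sum_on ns v (set_mset M)"
    using add.prems(1) split(2) MN(1) atom_image_mset_set_iff[of "set_mset M" ns v] by simp
  have partition: "partition_on (set_mset N) P"
    using P(1) unfolding atom_partitions_def by blast
  have disjnt: "disjnt (set_mset M) (\<Union>P)"
    using partition_onD1[OF partition] MN(4) by (simp add: disjnt_def)
  have "set_mset M \<notin> P"
    using disjnt minimal_zero_sum_onD(2)[OF minimal] unfolding disjnt_def by blast
  moreover have "finite P" using finite_elements[OF _ partition] by simp
  moreover have "insert (set_mset M) P \<in> atom_partitions ns v S"
  proof -
    have "S - set_mset M = set_mset N" "set_mset M \<subseteq> S"
      using MN(3,4) by blast+
    then have "partition_on S (insert (set_mset M) P)"
      using partition_on_insert[OF disjnt, of S] partition minimal_zero_sum_onD(2)[OF minimal]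
      by simp
    then show ?thesis using P(1) minimal by (simp add: atom_partitions_def)
  qed
  ultimately show ?case using P(2) by (metis card_insert_disjoint image_eqI size_add_mset)
qed

lemma atom_partition_imp_factorization:
  assumes "P \<in> atom_partitions ns v S" and "finite S"
  shows "card P \<in> Lset ns (image_mset v (mset_set S))"
proof -
  have "finite P"
    using assms finite_elements unfolding atom_partitions_def by blast
  then show ?thesis
    using assms
  proof (induction P arbitrary: S rule: finite_induct)
    case empty
    then have "S = {}" by (auto simp: atom_partitions_def dest: partition_onD1)
    then show ?case unfolding Lset_def by (auto intro!: exI[of _ "{#}"])
  next
    case (insert Q P)
    have disjnt: "disjnt Q (\<Union>P)"
      using insert.prems(1) insert.hyps(2) unfolding atom_partitions_def partition_on_def
      by (auto simp: pairwise_insert disjnt_def)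
    have Q: "minimal_zero_sum_on ns v Q" "Q \<subseteq> S" "P \<in> atom_partitions ns v (S - Q)"
      using insert.prems(1) partition_on_insert[OF disjnt] unfolding atom_partitions_def by auto
    obtain F where F: "card P = size F" "\<forall>A\<in>#F. atom ns A" "sum_mset F = image_mset v (mset_set (S - Q))"
      using insert.IH[OF Q(3)] insert.prems(2) unfolding Lset_def by auto
    have fin: "finite Q" using minimal_zero_sum_onD(1)[OF Q(1)] .
    have "mset_set S = mset_set Q + mset_set (S - Q)"
      using mset_set_Union[OF fin, of "S - Q"] insert.prems(2) Q(2) by (simp add: Un_absorb1)
    then have "sum_mset (add_mset (image_mset v (mset_set Q)) F) = image_mset v (mset_set S)"
      using F(3) by simp
    moreover have "\<forall>A\<in>#add_mset (image_mset v (mset_set Q)) F. atom ns A"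
      using F(2) Q(1) fin atom_image_mset_set_iff by auto
    ultimately show ?case
      using F(1) insert.hyps unfolding Lset_def by (auto intro!: exI[of _ "add_mset _ F"])
  qed
qed

lemma Lset_image_mset_set:
  assumes "finite S"
  shows "Lset ns (image_mset v (mset_set S)) = card ` atom_partitions ns v S"
proof
  show "Lset ns (image_mset v (mset_set S)) \<subseteq> card ` atom_partitions ns v S"
    using factorization_imp_atom_partition[OF _ _ assms] unfolding Lset_def by blast
  show "card ` atom_partitions ns v S \<subseteq> Lset ns (image_mset v (mset_set S))"
    using atom_partition_imp_factorization[OF _ assms] by blast
qed

lemma zero_sum_sum_mset_atoms: "\<forall>A\<in>#F. atom ns A \<Longrightarrow> zero_sum ns (sum_mset F)"
proof (induction F)
  case empty
  then show ?case by (simp add: zero_sum_def)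
next
  case (add A F)
  then have "zero_sum ns A" "zero_sum ns (sum_mset F)" by (simp_all add: atom_def)
  then show ?case by (auto simp: zero_sum_def mod_add_eq[symmetric])
qed

lemma delta_set_doubleton: "a < b \<Longrightarrow> b - a \<in> delta_set {a, b}"
  unfolding delta_set_def by auto

lemma two_lengths_imp_DeltaG:
  assumes "finite S" and "card ` atom_partitions ns v S = {a, b}" and "a < b"
  shows "b - a \<in> DeltaG ns"
proof -
  let ?B = "image_mset v (mset_set S)"
  have L: "Lset ns ?B = {a, b}" using Lset_image_mset_set[OF assms(1)] assms(2) by simp
  then obtain F where "\<forall>A\<in>#F. atom ns A" "sum_mset F = ?B"
    unfolding Lset_def by blast
  then have "zero_sum ns ?B" using zero_sum_sum_mset_atoms by metis
  moreover have "b - a \<in> delta_set (Lset ns ?B)"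
    using delta_set_doubleton[OF assms(3)] L by simp
  ultimately show ?thesis unfolding DeltaG_def by blast
qed

lemma minimal_zero_sum_on_doubleton:
  assumes "p \<noteq> q" "zero_sum_on ns v {p, q}" "\<not> zero_sum_on ns v {p}" "\<not> zero_sum_on ns v {q}"
  shows "minimal_zero_sum_on ns v {p, q}"
proof (rule minimal_zero_sum_onI)
  fix Q assume Q: "Q \<subseteq> {p, q}" "Q \<noteq> {}" "zero_sum_on ns v Q"
  then have "Q = {p} \<or> Q = {q} \<or> Q = {p, q}" by blast
  then show "{p, q} \<subseteq> Q" using Q(3) assms(3,4) by auto
qed (use assms(2) in auto)

lemma minimal_zero_sum_on_eq_doubleton:
  assumes "minimal_zero_sum_on ns v Q" "p \<in> Q" "q \<in> Q" "zero_sum_on ns v {p, q}"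
  shows "Q = {p, q}"
  using minimal_zero_sum_onD(4)[OF assms(1), of "{p, q}"] assms(2-4) by blast

lemma atom_partition_complement:
  assumes "Q \<subseteq> S" "minimal_zero_sum_on ns v Q" "minimal_zero_sum_on ns v (S - Q)"
  shows "{Q, S - Q} \<in> atom_partitions ns v S" "card {Q, S - Q} = 2"
proof -
  have "Q \<noteq> {}" "S - Q \<noteq> {}"
    using minimal_zero_sum_onD(2)[OF assms(2)] minimal_zero_sum_onD(2)[OF assms(3)] by simp_all
  moreover have "\<Union>{Q, S - Q} = S" "disjoint {Q, S - Q}"
    using assms(1) by (auto simp: pairwise_def disjnt_def)
  ultimately show "{Q, S - Q} \<in> atom_partitions ns v S"
    using assms(2,3) unfolding atom_partitions_def partition_on_def by auto
  show "card {Q, S - Q} = 2" using \<open>Q \<noteq> {}\<close> by (auto simp: card_insert_if)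
qed

lemma card_atom_partition_complement:
  assumes "P \<in> atom_partitions ns v S" "Q \<in> P" "minimal_zero_sum_on ns v (S - Q)"
  shows "card P = 2"
proof -
  have partition: "partition_on S P" and minimal: "\<And>Q'. Q' \<in> P \<Longrightarrow> minimal_zero_sum_on ns v Q'"
    using assms(1) unfolding atom_partitions_def by blast+
  have other: "Q' = S - Q" if "Q' \<in> P" "Q' \<noteq> Q" for Q'
  proof (rule minimal_zero_sum_onD(4)[OF assms(3)])
    show "Q' \<subseteq> S - Q"
      using partition_onD1[OF partition] partition_onD2[OF partition] that assms(2)
      by (auto simp: pairwise_def disjnt_def)
    show "Q' \<noteq> {}" "zero_sum_on ns v Q'"
      using minimal_zero_sum_onD(2,3)[OF minimal[OF that(1)]] by simp_all
  qed
  obtain x where "x \<in> S - Q" using minimal_zero_sum_onD(2)[OF assms(3)] by blast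
  then obtain Q' where "Q' \<in> P" "x \<in> Q'" "Q' \<noteq> Q"
    using partition_onD1[OF partition] by blast
  then have "P = {Q, S - Q}" using other assms(2) by blast
  moreover have "Q \<noteq> S - Q" using minimal_zero_sum_onD(2)[OF minimal[OF assms(2)]] by blast
  ultimately show ?thesis by simp
qed

lemma card_partition_on_pairs:
  assumes "partition_on S P" "finite S" "Q \<in> P" "\<And>Q'. Q' \<in> P \<Longrightarrow> Q' \<noteq> Q \<Longrightarrow> card Q' = 2"
  shows "card S = card Q + 2 * (card P - 1)"
proof -
  have fin: "finite P" using finite_elements[OF assms(2,1)] .
  have "finite Q'" if "Q' \<in> P" for Q'
    using finite_subset[OF Union_upper[OF that]] assms(2) partition_onD1[OF assms(1)] by simp
  then have "card S = (\<Sum>Q'\<in>P. card Q')"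
    using product_partition[OF assms(1)] by blast
  also have "\<dots> = card Q + (\<Sum>Q'\<in>P - {Q}. card Q')"
    using sum.remove[OF fin assms(3)] .
  also have "(\<Sum>Q'\<in>P - {Q}. card Q') = (\<Sum>Q'\<in>P - {Q}. 2)"
    using assms(4) by (intro sum.cong) auto
  finally show ?thesis using assms(3) fin by simp
qed

definition residue_vec :: "nat list \<Rightarrow> (nat \<Rightarrow> int) \<Rightarrow> nat list" where
  "residue_vec ns f = map (\<lambda>i. nat (f i mod int (ns ! i))) [0..<length ns]"

lemma zero_sum_on_residue_vec_iff:
  assumes "\<forall>i<length ns. 0 < ns ! i"
  shows "zero_sum_on ns (\<lambda>l. residue_vec ns (f l)) Q \<longleftrightarrow>
    (\<forall>i<length ns. int (ns ! i) dvd (\<Sum>l\<in>Q. f l i))"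
proof -
  have "(\<lambda>l. residue_vec ns (f l)) ` Q \<subseteq> Gcar ns"
    using assms by (auto simp: residue_vec_def Gcar_def nat_less_iff)
  moreover have "(\<Sum>l\<in>Q. residue_vec ns (f l) ! i) mod ns ! i = 0 \<longleftrightarrow> int (ns ! i) dvd (\<Sum>l\<in>Q. f l i)"
    if i: "i < length ns" for i
  proof -
    have "int (\<Sum>l\<in>Q. residue_vec ns (f l) ! i) = (\<Sum>l\<in>Q. f l i mod int (ns ! i))"
      using i assms by (simp add: residue_vec_def)
    then have "(\<Sum>l\<in>Q. residue_vec ns (f l) ! i) mod ns ! i = 0 \<longleftrightarrow>
        (\<Sum>l\<in>Q. f l i mod int (ns ! i)) mod int (ns ! i) = 0"
      by (metis of_nat_0 of_nat_eq_iff zmod_int)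
    then show ?thesis by (simp add: mod_sum_eq dvd_eq_mod_eq_0)
  qed
  ultimately show ?thesis unfolding zero_sum_on_def by auto
qed

datatype label = Pos nat | Neg nat | Extra | Coextra

lemma sum_over_labels:
  fixes f :: "label \<Rightarrow> 'b::comm_monoid_add"
  assumes "finite Q"
  shows "(\<Sum>l\<in>Q. f l) = (\<Sum>t\<in>{t. Pos t \<in> Q}. f (Pos t)) + (\<Sum>t\<in>{t. Neg t \<in> Q}. f (Neg t))
     + (if Extra \<in> Q then f Extra else 0) + (if Coextra \<in> Q then f Coextra else 0)"
proof -
  have fin: "finite {t. Pos t \<in> Q}" "finite {t. Neg t \<in> Q}"
    using finite_vimageI[OF assms, of Pos] finite_vimageI[OF assms, of Neg] by (simp_all add: vimage_def inj_def)
  have Q: "Q = ((Pos ` {t. Pos t \<in> Q} \<union> Neg ` {t. Neg t \<in> Q}) \<union> (Q \<inter> {Extra})) \<union> (Q \<inter> {Coextra})"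
    by (auto intro: label.exhaust)
  have "(\<Sum>l\<in>Q. f l) = (\<Sum>l\<in>Pos ` {t. Pos t \<in> Q}. f l) + (\<Sum>l\<in>Neg ` {t. Neg t \<in> Q}. f l)
     + (\<Sum>l\<in>Q \<inter> {Extra}. f l) + (\<Sum>l\<in>Q \<inter> {Coextra}. f l)"
    by (subst Q, subst sum.union_disjoint, use fin in auto)+
  then show ?thesis by (simp add: sum.reindex inj_on_def Int_insert_right)
qed

lemma card_over_labels:
  "finite Q \<Longrightarrow> card Q = card {t. Pos t \<in> Q} + card {t. Neg t \<in> Q}
     + (if Extra \<in> Q then 1 else 0) + (if Coextra \<in> Q then 1 else 0)"
  using sum_over_labels[of Q "\<lambda>_. 1 :: nat"] by simp

lemma atom_partition_insert_pairs:
  assumes "minimal_zero_sum_on ns v Q" "\<And>t. t < d \<Longrightarrow> minimal_zero_sum_on ns v {Pos t, Neg t}"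
    and "Q \<inter> (Pos ` {..<d} \<union> Neg ` {..<d}) = {}"
  shows "insert Q ((\<lambda>t. {Pos t, Neg t}) ` {..<d})
      \<in> atom_partitions ns v (Q \<union> Pos ` {..<d} \<union> Neg ` {..<d})"
    and "card (insert Q ((\<lambda>t. {Pos t, Neg t}) ` {..<d})) = d + 1"
proof -
  have "Q \<notin> (\<lambda>t. {Pos t, Neg t}) ` {..<d}" using assms(3) by auto
  moreover have "Q \<noteq> {}" using minimal_zero_sum_onD(2)[OF assms(1)] .
  ultimately show "insert Q ((\<lambda>t. {Pos t, Neg t}) ` {..<d})
      \<in> atom_partitions ns v (Q \<union> Pos ` {..<d} \<union> Neg ` {..<d})"
    using assms unfolding atom_partitions_def partition_on_def
    by (auto simp: pairwise_def disjnt_def)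
  have "inj_on (\<lambda>t. {Pos t, Neg t}) {..<d}" by (auto simp: inj_on_def doubleton_eq_iff)
  with \<open>Q \<notin> _\<close> show "card (insert Q ((\<lambda>t. {Pos t, Neg t}) ` {..<d})) = d + 1"
    by (simp add: card_image)
qed

lemma int_dvd_cases:
  fixes n x :: int
  assumes "n dvd x" "- n < x" "x < 2 * n"
  shows "x = 0 \<or> x = n"
proof -
  obtain q where x: "x = n * q" using assms(1) by blast
  have "0 < n" using assms(2,3) by linarith
  moreover have "n * (- 1) < n * q" "n * q < n * 2"
    using assms(2,3) unfolding x by (simp_all add: mult.commute)
  ultimately have "- 1 < q" "q < 2"
    using mult_less_cancel_left_pos by blast+
  then have "q = 0 \<or> q = 1" by linarith
  then show ?thesis using x by auto
qed

lemma image_subset_if_card_vimage: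
  assumes "finite T" "{t. C t \<in> Q} \<subseteq> T" "card T \<le> card {t. C t \<in> Q}"
  shows "C ` T \<subseteq> Q"
  using card_seteq[OF assms] by blast

section \<open>A sequence over the last cyclic summand\<close>

locale cyclic_witness =
  fixes ns :: "nat list" and m :: nat
  assumes ns_pos: "\<forall>i<length ns. 0 < ns ! i"
    and ns_nonempty: "ns \<noteq> []"
    and m_ge_2: "2 \<le> m"
    and m_less: "m < last ns"
begin

abbreviation n :: nat where "n \<equiv> last ns"

text \<open>With e = (0, ..., 0, 1), the labels Pos t, Neg t and Extra stand for e, -e and me.\<close>

definition weight :: "label \<Rightarrow> int" where
  "weight l = (case l of Pos t \<Rightarrow> 1 | Neg t \<Rightarrow> - 1 | Extra \<Rightarrow> int m | Coextra \<Rightarrow> 0)"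

definition entry :: "label \<Rightarrow> nat \<Rightarrow> int" where
  "entry l i = (if i = length ns - 1 then weight l else 0)"

definition val :: "label \<Rightarrow> nat list" where
  "val = (\<lambda>l. residue_vec ns (entry l))"

definition labels :: "label set" where
  "labels = Pos ` {..<n} \<union> Neg ` {..<m} \<union> {Extra}"

abbreviation npos :: "label set \<Rightarrow> nat" where "npos Q \<equiv> card {t. Pos t \<in> Q}"
abbreviation nneg :: "label set \<Rightarrow> nat" where "nneg Q \<equiv> card {t. Neg t \<in> Q}"

lemma zero_sum_on_iff:
  assumes "finite Q"
  shows "zero_sum_on ns val Q \<longleftrightarrow> int n dvd int (npos Q) - int (nneg Q) + (if Extra \<in> Q then int m else 0)"
proof -
  have last: "length ns - 1 < length ns" "ns ! (length ns - 1) = n"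
    using ns_nonempty by (simp_all add: last_conv_nth)
  have "(\<Sum>l\<in>Q. weight l) = int (npos Q) - int (nneg Q) + (if Extra \<in> Q then int m else 0)"
    using sum_over_labels[OF assms, of weight] by (simp add: weight_def)
  moreover have "(\<Sum>l\<in>Q. entry l i) = (if i = length ns - 1 then (\<Sum>l\<in>Q. weight l) else 0)" for i
    by (simp add: entry_def)
  ultimately show ?thesis
    unfolding val_def zero_sum_on_residue_vec_iff[OF ns_pos] using last by auto
qed

lemma labels_finite: "finite labels"
  by (simp add: labels_def)

lemma pos_labels: "Q \<subseteq> labels \<Longrightarrow> {t. Pos t \<in> Q} \<subseteq> {..<n}"
  and neg_labels: "Q \<subseteq> labels \<Longrightarrow> {t. Neg t \<in> Q} \<subseteq> {..<m}"
  by (auto simp: labels_def)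

lemma npos_le: "Q \<subseteq> labels \<Longrightarrow> npos Q \<le> n"
  using card_mono[OF _ pos_labels] by fastforce

lemma nneg_le: "Q \<subseteq> labels \<Longrightarrow> nneg Q \<le> m"
  using card_mono[OF _ neg_labels] by fastforce

lemma card_subset_labels:
  "Q \<subseteq> labels \<Longrightarrow> card Q = npos Q + nneg Q + (if Extra \<in> Q then 1 else 0)"
  using card_over_labels[OF finite_subset[OF _ labels_finite]] by (auto simp: labels_def)

lemma zero_sum_on_cases:
  assumes "Q \<subseteq> labels" "zero_sum_on ns val Q"
  shows "Extra \<in> Q \<Longrightarrow> (npos Q = 0 \<and> nneg Q = m) \<or> npos Q + m = n + nneg Q"
    and "Extra \<notin> Q \<Longrightarrow> npos Q = nneg Q \<or> (npos Q = n \<and> nneg Q = 0)"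
proof -
  have dvd: "int n dvd int (npos Q) - int (nneg Q) + (if Extra \<in> Q then int m else 0)"
    using assms zero_sum_on_iff finite_subset[OF _ labels_finite] by blast
  have bounds: "npos Q \<le> n" "nneg Q \<le> m" using npos_le nneg_le assms(1) by auto
  show "Extra \<in> Q \<Longrightarrow> (npos Q = 0 \<and> nneg Q = m) \<or> npos Q + m = n + nneg Q"
    using int_dvd_cases[of "int n" "int (npos Q) - int (nneg Q) + int m"] dvd bounds m_less by auto
  show "Extra \<notin> Q \<Longrightarrow> npos Q = nneg Q \<or> (npos Q = n \<and> nneg Q = 0)"
    using int_dvd_cases[of "int n" "int (npos Q) - int (nneg Q)"] dvd bounds m_less by auto
qed

lemma n_gt_2: "2 < n"
  using m_ge_2 m_less by linarith

lemma nonempty_iff: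
  "Q \<subseteq> labels \<Longrightarrow> Q \<noteq> {} \<longleftrightarrow> npos Q \<noteq> 0 \<or> nneg Q \<noteq> 0 \<or> Extra \<in> Q"
  using card_subset_labels[of Q] finite_subset[OF _ labels_finite] by auto

lemma minimal_pair: "minimal_zero_sum_on ns val {Pos t, Neg t'}"
proof (rule minimal_zero_sum_on_doubleton)
  have "{x. Pos x \<in> {Pos t, Neg t'}} = {t}" "{x. Neg x \<in> {Pos t, Neg t'}} = {t'}"
    "{x. Pos x \<in> {Neg t'}} = {}" "{x. Neg x \<in> {Pos t}} = {}" by auto
  then show "zero_sum_on ns val {Pos t, Neg t'}" "\<not> zero_sum_on ns val {Pos t}"
    "\<not> zero_sum_on ns val {Neg t'}"
    using n_gt_2 by (simp_all add: zero_sum_on_iff)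
qed simp

definition neg_block :: "label set" where "neg_block = insert Extra (Neg ` {..<m})"
definition pos_block :: "label set" where "pos_block = Pos ` {..<n}"
definition mixed_block :: "label set" where "mixed_block = insert Extra (Pos ` {m..<n})"

lemma minimal_neg_block: "minimal_zero_sum_on ns val neg_block"
proof (rule minimal_zero_sum_onI)
  have "{t. Pos t \<in> neg_block} = {}" "{t. Neg t \<in> neg_block} = {..<m}"
    by (auto simp: neg_block_def)
  then show "zero_sum_on ns val neg_block"
    by (simp add: zero_sum_on_iff neg_block_def)
  fix Q assume Q: "Q \<subseteq> neg_block" "Q \<noteq> {}" "zero_sum_on ns val Q"
  have sub: "Q \<subseteq> labels" using Q(1) by (auto simp: neg_block_def labels_def)
  have "{t. Pos t \<in> Q} = {}" using Q(1) by (auto simp: neg_block_def)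
  then have "npos Q = 0" by simp
  have extra: "Extra \<in> Q"
  proof (rule ccontr)
    assume "Extra \<notin> Q"
    with zero_sum_on_cases(2)[OF sub Q(3)] \<open>npos Q = 0\<close> n_gt_2 have "nneg Q = 0" by auto
    with nonempty_iff[OF sub] Q(2) \<open>npos Q = 0\<close> \<open>Extra \<notin> Q\<close> show False by simp
  qed
  with zero_sum_on_cases(1)[OF sub Q(3)] \<open>npos Q = 0\<close> m_less have "nneg Q = m" by auto
  with extra show "neg_block \<subseteq> Q"
    using image_subset_if_card_vimage[OF _ neg_labels[OF sub]] by (simp add: neg_block_def)
qed (auto simp: neg_block_def)

lemma minimal_pos_block: "minimal_zero_sum_on ns val pos_block"
proof (rule minimal_zero_sum_onI)
  have "{t. Pos t \<in> pos_block} = {..<n}" "{t. Neg t \<in> pos_block} = {}" "Extra \<notin> pos_block"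
    by (auto simp: pos_block_def)
  then show "zero_sum_on ns val pos_block"
    by (simp add: zero_sum_on_iff pos_block_def)
  fix Q assume Q: "Q \<subseteq> pos_block" "Q \<noteq> {}" "zero_sum_on ns val Q"
  have sub: "Q \<subseteq> labels" using Q(1) by (auto simp: pos_block_def labels_def)
  have "{t. Neg t \<in> Q} = {}" "Extra \<notin> Q" using Q(1) by (auto simp: pos_block_def)
  then have "nneg Q = 0" "Extra \<notin> Q" by simp_all
  then have "npos Q = n"
    using zero_sum_on_cases(2)[OF sub Q(3)] nonempty_iff[OF sub] Q(2) by fastforce
  then show "pos_block \<subseteq> Q"
    using image_subset_if_card_vimage[OF _ pos_labels[OF sub]] by (simp add: pos_block_def)
qed (use n_gt_2 in \<open>auto simp: pos_block_def\<close>)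

lemma minimal_mixed_block: "minimal_zero_sum_on ns val mixed_block"
proof (rule minimal_zero_sum_onI)
  have "{t. Pos t \<in> mixed_block} = {m..<n}" "{t. Neg t \<in> mixed_block} = {}"
    by (auto simp: mixed_block_def)
  then show "zero_sum_on ns val mixed_block"
    using m_less by (simp add: zero_sum_on_iff mixed_block_def)
  fix Q assume Q: "Q \<subseteq> mixed_block" "Q \<noteq> {}" "zero_sum_on ns val Q"
  have sub: "Q \<subseteq> labels" using Q(1) m_less by (auto simp: mixed_block_def labels_def)
  have pos: "{t. Pos t \<in> Q} \<subseteq> {m..<n}" and "{t. Neg t \<in> Q} = {}"
    using Q(1) by (auto simp: mixed_block_def)
  then have "nneg Q = 0" by simp
  have "npos Q \<le> n - m" using card_mono[OF _ pos] by simp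
  have extra: "Extra \<in> Q"
  proof (rule ccontr)
    assume "Extra \<notin> Q"
    with zero_sum_on_cases(2)[OF sub Q(3)] \<open>nneg Q = 0\<close> \<open>npos Q \<le> n - m\<close> m_ge_2
    have "npos Q = 0" by auto
    with nonempty_iff[OF sub] Q(2) \<open>nneg Q = 0\<close> \<open>Extra \<notin> Q\<close> show False by simp
  qed
  with zero_sum_on_cases(1)[OF sub Q(3)] \<open>nneg Q = 0\<close> m_ge_2 have "npos Q = n - m" by auto
  with extra show "mixed_block \<subseteq> Q"
    using image_subset_if_card_vimage[OF _ pos] by (simp add: mixed_block_def)
qed (auto simp: mixed_block_def)

lemma extra_block_cases:
  assumes "minimal_zero_sum_on ns val Q" "Q \<subseteq> labels" "Extra \<in> Q"
  shows "Q = neg_block \<or> (nneg Q = 0 \<and> npos Q = n - m)"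
proof (cases "npos Q = 0 \<and> nneg Q = m")
  case True
  then have "{t. Pos t \<in> Q} = {}" "Neg ` {..<m} \<subseteq> Q"
    using finite_subset[OF pos_labels[OF assms(2)]] image_subset_if_card_vimage[OF _ neg_labels[OF assms(2)]]
    by auto
  then have "Q = neg_block"
    using assms(2,3) unfolding labels_def neg_block_def by auto
  then show ?thesis ..
next
  case False
  then have sum: "npos Q + m = n + nneg Q"
    using zero_sum_on_cases(1)[OF assms(2) minimal_zero_sum_onD(3)[OF assms(1)] assms(3)] by blast
  have "nneg Q = 0"
  proof (rule ccontr)
    assume "nneg Q \<noteq> 0"
    moreover have "npos Q \<noteq> 0" using sum m_less by linarith
    ultimately obtain t t' where "Pos t \<in> Q" "Neg t' \<in> Q"
      by (metis (no_types, lifting) card.empty Collect_empty_eq)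
    then have "Q = {Pos t, Neg t'}"
      using minimal_zero_sum_on_eq_doubleton[OF assms(1)] minimal_zero_sum_onD(3)[OF minimal_pair]
      by blast
    then show False using assms(3) by simp
  qed
  then show ?thesis using sum by auto
qed

lemma block_without_extra:
  assumes "minimal_zero_sum_on ns val Q" "Q \<subseteq> labels" "Extra \<notin> Q" "\<not> pos_block \<subseteq> Q"
  shows "card Q = 2"
proof -
  have "npos Q \<noteq> n"
    using assms(4) image_subset_if_card_vimage[OF _ pos_labels[OF assms(2)]]
    by (auto simp: pos_block_def)
  then have "npos Q = nneg Q"
    using zero_sum_on_cases(2)[OF assms(2) minimal_zero_sum_onD(3)[OF assms(1)] assms(3)] by blast
  moreover have "Q \<noteq> {}" using minimal_zero_sum_onD(2)[OF assms(1)] .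
  ultimately have "npos Q \<noteq> 0" "nneg Q \<noteq> 0"
    using nonempty_iff[OF assms(2)] assms(3) by auto
  then obtain t t' where "Pos t \<in> Q" "Neg t' \<in> Q"
    by (metis (no_types, lifting) card.empty Collect_empty_eq)
  then have "Q = {Pos t, Neg t'}"
    using minimal_zero_sum_on_eq_doubleton[OF assms(1)] minimal_zero_sum_onD(3)[OF minimal_pair]
    by blast
  then show ?thesis by simp
qed

lemma card_labels: "card labels = n + m + 1"
proof -
  have "{t. Pos t \<in> labels} = {..<n}" "{t. Neg t \<in> labels} = {..<m}" "Extra \<in> labels"
    by (auto simp: labels_def)
  then show ?thesis using card_subset_labels[of labels] by simp
qed

lemma card_atom_partition:
  assumes "P \<in> atom_partitions ns val labels"
  shows "card P = 2 \<or> card P = m + 1"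
proof -
  have partition: "partition_on labels P" and minimal: "\<And>Q. Q \<in> P \<Longrightarrow> minimal_zero_sum_on ns val Q"
    using assms unfolding atom_partitions_def by blast+
  have sub: "Q \<subseteq> labels" if "Q \<in> P" for Q using partition_onD1[OF partition] that by blast
  have disj: "Q \<inter> Q' = {}" if "Q \<in> P" "Q' \<in> P" "Q \<noteq> Q'" for Q Q'
    using partition_onD2[OF partition] that by (auto simp: pairwise_def disjnt_def)
  obtain QE where QE: "QE \<in> P" "Extra \<in> QE"
    using partition_onD1[OF partition] unfolding labels_def by blast
  from extra_block_cases[OF minimal[OF QE(1)] sub[OF QE(1)] QE(2)]
  show ?thesis
  proof
    assume "QE = neg_block"
    moreover have "labels - neg_block = pos_block"
      using m_less by (auto simp: labels_def neg_block_def pos_block_def)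
    ultimately have "card P = 2"
      using card_atom_partition_complement[OF assms QE(1)] minimal_pos_block by simp
    then show ?thesis ..
  next
    assume counts: "nneg QE = 0 \<and> npos QE = n - m"
    then obtain t where t: "Pos t \<in> QE"
      using m_less by (metis (no_types, lifting) card.empty Collect_empty_eq zero_less_diff not_less0)
    have "card Q = 2" if "Q \<in> P" "Q \<noteq> QE" for Q
    proof (rule block_without_extra[OF minimal[OF that(1)] sub[OF that(1)]])
      show "Extra \<notin> Q" "\<not> pos_block \<subseteq> Q"
        using disj[OF that(1) QE(1) that(2)] QE(2) t pos_labels[OF sub[OF QE(1)]]
        by (auto simp: pos_block_def)
    qed
    then have "card labels = card QE + 2 * (card P - 1)"
      using card_partition_on_pairs[OF partition labels_finite QE(1)] by blast
    moreover have "card QE = n - m + 1"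
      using card_subset_labels[OF sub[OF QE(1)]] counts QE(2) by simp
    moreover have "card P \<noteq> 0"
      using QE(1) finite_elements[OF labels_finite partition] by auto
    ultimately have "card P = m + 1" using card_labels m_less by arith
    then show ?thesis ..
  qed
qed

lemma atom_partition_cards: "card ` atom_partitions ns val labels = {2, m + 1}"
proof (intro equalityI subsetI)
  show "k \<in> {2, m + 1}" if "k \<in> card ` atom_partitions ns val labels" for k
    using that card_atom_partition by blast
  have "labels - neg_block = pos_block" "neg_block \<subseteq> labels"
    using m_less by (auto simp: labels_def neg_block_def pos_block_def)
  then have "{neg_block, pos_block} \<in> atom_partitions ns val labels" "card {neg_block, pos_block} = 2"
    using atom_partition_complement[of neg_block labels] minimal_neg_block minimal_pos_block by auto
  then have two: "2 \<in> card ` atom_partitions ns val labels"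
    by (rule rev_image_eqI[OF _ sym])
  let ?P = "insert mixed_block ((\<lambda>t. {Pos t, Neg t}) ` {..<m})"
  have "labels = mixed_block \<union> Pos ` {..<m} \<union> Neg ` {..<m}"
    "mixed_block \<inter> (Pos ` {..<m} \<union> Neg ` {..<m}) = {}"
    using m_less by (auto simp: labels_def mixed_block_def image_iff)
  then have "?P \<in> atom_partitions ns val labels" "card ?P = m + 1"
    using atom_partition_insert_pairs[OF minimal_mixed_block minimal_pair] by simp_all
  then have "m + 1 \<in> card ` atom_partitions ns val labels"
    by (rule rev_image_eqI[OF _ sym])
  with two show "k \<in> card ` atom_partitions ns val labels" if "k \<in> {2, m + 1}" for k
    using that by blast
qed

theorem distance_in_DeltaG: "m - 1 \<in> DeltaG ns"
  using two_lengths_imp_DeltaG[OF labels_finite atom_partition_cards] m_ge_2 by simp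

end

section \<open>A sequence built from a colouring of the coordinates\<close>

lemma exists_colouring:
  fixes c :: "nat \<Rightarrow> nat"
  assumes "K \<le> (\<Sum>i<r. c i)"
  obtains colour where "\<And>t. t < K \<Longrightarrow> colour t < r"
    and "\<And>i. card {t. t < K \<and> colour t = i} \<le> c i"
proof -
  define xs where "xs = concat (map (\<lambda>i. replicate (c i) i) [0..<r])"
  have "length (concat (map (\<lambda>i. replicate (c i) i) [0..<s])) = (\<Sum>i<s. c i)" for s
    by (induction s) simp_all
  then have len: "K \<le> length xs" using assms by (simp add: xs_def)
  have "length (filter (\<lambda>y. y = i) (concat (map (\<lambda>j. replicate (c j) j) [0..<s])))
      = (if i < s then c i else 0)" for i s
    by (induction s) (auto simp: filter_replicate less_Suc_eq)
  then have count: "length (filter (\<lambda>y. y = i) xs) \<le> c i" for i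
    by (simp add: xs_def)
  show thesis
  proof
    show "xs ! t < r" if "t < K" for t
      using nth_mem[of t xs] len that by (auto simp: xs_def)
    fix i
    have "card {t. t < K \<and> xs ! t = i} \<le> card {t. t < length xs \<and> xs ! t = i}"
      using len by (intro card_mono) auto
    also have "\<dots> \<le> c i"
      using count[of i] by (simp add: length_filter_conv_card)
    finally show "card {t. t < K \<and> xs ! t = i} \<le> c i" .
  qed
qed

locale colouring_witness =
  fixes ns :: "nat list" and K :: nat and colour :: "nat \<Rightarrow> nat"
  assumes ns_pos: "\<forall>i<length ns. 0 < ns ! i"
    and K_ge_2: "2 \<le> K"
    and colour_less: "\<And>t. t < K \<Longrightarrow> colour t < length ns"
    and class_size_bound: "\<And>i. i < length ns \<Longrightarrow> 2 * card {t. t < K \<and> colour t = i} \<le> ns ! i"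
begin

abbreviation class_size :: "nat \<Rightarrow> nat" where
  "class_size i \<equiv> card {t. t < K \<and> colour t = i}"

text \<open>With f_t the unit vector at coordinate colour t and g = f_0 + ... + f_(K-1), the labels
  Pos t, Neg t, Extra and Coextra stand for f_t, -f_t, -g and g.\<close>

definition entry :: "label \<Rightarrow> nat \<Rightarrow> int" where
  "entry l i = (case l of Pos t \<Rightarrow> of_bool (colour t = i) | Neg t \<Rightarrow> - of_bool (colour t = i)
     | Extra \<Rightarrow> - int (class_size i) | Coextra \<Rightarrow> int (class_size i))"

definition val :: "label \<Rightarrow> nat list" where
  "val = (\<lambda>l. residue_vec ns (entry l))"

definition labels :: "label set" where
  "labels = Pos ` {..<K} \<union> Neg ` {..<K} \<union> {Extra, Coextra}"

abbreviation npos :: "nat \<Rightarrow> label set \<Rightarrow> nat" where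
  "npos i Q \<equiv> card {t. Pos t \<in> Q \<and> colour t = i}"
abbreviation nneg :: "nat \<Rightarrow> label set \<Rightarrow> nat" where
  "nneg i Q \<equiv> card {t. Neg t \<in> Q \<and> colour t = i}"

lemma zero_sum_on_iff:
  assumes "finite Q"
  shows "zero_sum_on ns val Q \<longleftrightarrow> (\<forall>i<length ns. int (ns ! i) dvd
    int (npos i Q) - int (nneg i Q) + (of_bool (Coextra \<in> Q) - of_bool (Extra \<in> Q)) * int (class_size i))"
proof -
  have fin: "finite {t. Pos t \<in> Q}" "finite {t. Neg t \<in> Q}"
    using finite_vimageI[OF assms, of Pos] finite_vimageI[OF assms, of Neg] by (simp_all add: vimage_def inj_def)
  have "(\<Sum>l\<in>Q. entry l i) = int (npos i Q) - int (nneg i Q)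
      + (of_bool (Coextra \<in> Q) - of_bool (Extra \<in> Q)) * int (class_size i)" for i
    using sum_over_labels[OF assms, of "\<lambda>l. entry l i"] fin
    by (simp add: entry_def sum_negf Collect_conj_eq algebra_simps)
  then show ?thesis
    unfolding val_def zero_sum_on_residue_vec_iff[OF ns_pos] by simp
qed

lemma labels_finite: "finite labels"
  by (simp add: labels_def)

lemma class_size_less: "i < length ns \<Longrightarrow> class_size i < ns ! i"
  using class_size_bound[of i] ns_pos by fastforce

lemma pos_class: "Q \<subseteq> labels \<Longrightarrow> {t. Pos t \<in> Q \<and> colour t = i} \<subseteq> {t. t < K \<and> colour t = i}"
  and neg_class: "Q \<subseteq> labels \<Longrightarrow> {t. Neg t \<in> Q \<and> colour t = i} \<subseteq> {t. t < K \<and> colour t = i}"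
  by (auto simp: labels_def)

lemma npos_le: "Q \<subseteq> labels \<Longrightarrow> npos i Q \<le> class_size i"
  and nneg_le: "Q \<subseteq> labels \<Longrightarrow> nneg i Q \<le> class_size i"
  using card_mono[OF _ pos_class] card_mono[OF _ neg_class] by fastforce+

lemma balanced_counts:
  assumes "Q \<subseteq> labels" "zero_sum_on ns val Q" "Extra \<in> Q \<longleftrightarrow> Coextra \<in> Q" "i < length ns"
  shows "npos i Q = nneg i Q"
proof -
  let ?x = "int (npos i Q) - int (nneg i Q)"
  have dvd: "int (ns ! i) dvd ?x"
    using assms zero_sum_on_iff finite_subset[OF _ labels_finite] by auto
  have b: "npos i Q \<le> class_size i" "nneg i Q \<le> class_size i" "class_size i < ns ! i"
    using npos_le[OF assms(1)] nneg_le[OF assms(1)] class_size_less[OF assms(4)] by auto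
  then have "- int (ns ! i) < ?x" "?x < 2 * int (ns ! i)" by linarith+
  from int_dvd_cases[OF dvd this] b show ?thesis by linarith
qed

lemma unbalanced_counts:
  assumes "Q \<subseteq> labels" "zero_sum_on ns val Q" "(Extra \<in> Q) \<noteq> (Coextra \<in> Q)" "i < length ns"
  shows "(npos i Q = class_size i \<and> nneg i Q = 0) \<or> (npos i Q = 0 \<and> nneg i Q = class_size i)"
proof -
  define x where "x = (if Coextra \<in> Q then 1 else - 1) * (int (npos i Q) - int (nneg i Q)) + int (class_size i)"
  have "int (ns ! i) dvd (if Coextra \<in> Q then 1 else - 1) * (int (npos i Q) - int (nneg i Q)
      + (of_bool (Coextra \<in> Q) - of_bool (Extra \<in> Q)) * int (class_size i))"
    using assms zero_sum_on_iff finite_subset[OF _ labels_finite] by auto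
  also have "\<dots> = x" unfolding x_def using assms(3) by (auto simp: algebra_simps)
  finally have dvd: "int (ns ! i) dvd x" .
  have b: "npos i Q \<le> class_size i" "nneg i Q \<le> class_size i" "2 * class_size i \<le> ns ! i"
    using npos_le[OF assms(1)] nneg_le[OF assms(1)] class_size_bound[OF assms(4)] by auto
  then have "- int (ns ! i) < x" "x < 2 * int (ns ! i)"
    using class_size_less[OF assms(4)] unfolding x_def by auto
  from int_dvd_cases[OF dvd this] b show ?thesis
    unfolding x_def by (auto split: if_splits)
qed

lemma class_size_pos: "t < K \<Longrightarrow> 0 < class_size (colour t)"
  by (auto simp: card_gt_0_iff)

lemma npos_pos: "Q \<subseteq> labels \<Longrightarrow> Pos t \<in> Q \<Longrightarrow> 0 < npos (colour t) Q"
  and nneg_pos: "Q \<subseteq> labels \<Longrightarrow> Neg t \<in> Q \<Longrightarrow> 0 < nneg (colour t) Q"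
  using finite_subset[OF pos_class] finite_subset[OF neg_class] by (auto simp: card_gt_0_iff)

lemma unbalanced_complement:
  assumes "Q \<subseteq> labels" "zero_sum_on ns val Q" "(Extra \<in> Q) \<noteq> (Coextra \<in> Q)" "t < K"
  shows "Pos t \<in> Q \<longleftrightarrow> Neg t \<notin> Q"
proof -
  let ?i = "colour t"
  have t: "t \<in> {t'. t' < K \<and> colour t' = ?i}" using assms(4) by simp
  from unbalanced_counts[OF assms(1-3) colour_less[OF assms(4)]] show ?thesis
  proof
    assume "npos ?i Q = class_size ?i \<and> nneg ?i Q = 0"
    then have "{t'. Pos t' \<in> Q \<and> colour t' = ?i} = {t'. t' < K \<and> colour t' = ?i}"
      "{t'. Neg t' \<in> Q \<and> colour t' = ?i} = {}"
      using card_seteq[OF _ pos_class[OF assms(1)]] finite_subset[OF neg_class[OF assms(1)]] by auto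
    then show ?thesis using t by blast
  next
    assume "npos ?i Q = 0 \<and> nneg ?i Q = class_size ?i"
    then have "{t'. Neg t' \<in> Q \<and> colour t' = ?i} = {t'. t' < K \<and> colour t' = ?i}"
      "{t'. Pos t' \<in> Q \<and> colour t' = ?i} = {}"
      using card_seteq[OF _ neg_class[OF assms(1)]] finite_subset[OF pos_class[OF assms(1)]] by auto
    then show ?thesis using t by blast
  qed
qed

lemma one_sided_zero_sum_empty:
  assumes "Q \<subseteq> labels" "zero_sum_on ns val Q" "Extra \<notin> Q" "Coextra \<notin> Q"
    and "(\<forall>t. Neg t \<notin> Q) \<or> (\<forall>t. Pos t \<notin> Q)"
  shows "Q = {}"
proof (rule ccontr)
  assume "Q \<noteq> {}"
  then obtain t where t: "t < K" "Pos t \<in> Q \<or> Neg t \<in> Q"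
    using assms(1,3,4) by (auto simp: labels_def)
  have "npos (colour t) Q = nneg (colour t) Q"
    using balanced_counts[OF assms(1,2) _ colour_less[OF t(1)]] assms(3,4) by simp
  then show False
    using assms(5) t(2) npos_pos[OF assms(1)] nneg_pos[OF assms(1)] by fastforce
qed

lemma minimal_pair:
  assumes "colour t = colour t'" "t < K"
  shows "minimal_zero_sum_on ns val {Pos t, Neg t'}"
proof (rule minimal_zero_sum_on_doubleton)
  have sets: "{x. Pos x \<in> {Pos t, Neg t'} \<and> colour x = i} = (if colour t = i then {t} else {})"
    "{x. Neg x \<in> {Pos t, Neg t'} \<and> colour x = i} = (if colour t' = i then {t'} else {})"
    "{x. Pos x \<in> {Pos t} \<and> colour x = i} = (if colour t = i then {t} else {})"
    "{x. Neg x \<in> {Neg t'} \<and> colour x = i} = (if colour t' = i then {t'} else {})" for i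
    by auto
  then show "zero_sum_on ns val {Pos t, Neg t'}"
    using assms(1) by (simp add: zero_sum_on_iff)
  have "1 < ns ! colour t"
    using class_size_bound[OF colour_less] class_size_pos assms(2) by fastforce
  then show "\<not> zero_sum_on ns val {Pos t}" "\<not> zero_sum_on ns val {Neg t'}"
    using sets colour_less[OF assms(2)] assms(1) by (auto simp: zero_sum_on_iff)
qed simp

lemma minimal_extra_pair: "minimal_zero_sum_on ns val {Extra, Coextra}"
proof (rule minimal_zero_sum_on_doubleton)
  show "zero_sum_on ns val {Extra, Coextra}" by (simp add: zero_sum_on_iff)
  have "0 < class_size (colour 0)" "class_size (colour 0) < ns ! colour 0" "colour 0 < length ns"
    using class_size_pos class_size_less colour_less K_ge_2 by auto
  then have "\<not> int (ns ! colour 0) dvd int (class_size (colour 0))"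
    using zdvd_not_zless by auto
  then show "\<not> zero_sum_on ns val {Extra}" "\<not> zero_sum_on ns val {Coextra}"
    using \<open>colour 0 < length ns\<close> by (auto simp: zero_sum_on_iff)
qed simp

definition pos_block :: "label set" where "pos_block = insert Extra (Pos ` {..<K})"
definition neg_block :: "label set" where "neg_block = insert Coextra (Neg ` {..<K})"

lemma minimal_pos_block: "minimal_zero_sum_on ns val pos_block"
proof (rule minimal_zero_sum_onI)
  have "Extra \<in> pos_block" "Coextra \<notin> pos_block" "finite pos_block"
    by (auto simp: pos_block_def)
  moreover have "{t. Pos t \<in> pos_block \<and> colour t = i} = {t. t < K \<and> colour t = i}"
    "card {t. Neg t \<in> pos_block \<and> colour t = i} = 0" for i
    by (auto simp: pos_block_def image_iff)
  ultimately show "zero_sum_on ns val pos_block" by (simp add: zero_sum_on_iff)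
  fix Q assume Q: "Q \<subseteq> pos_block" "Q \<noteq> {}" "zero_sum_on ns val Q"
  have sub: "Q \<subseteq> labels" using Q(1) by (auto simp: pos_block_def labels_def)
  have "Coextra \<notin> Q" "\<forall>t. Neg t \<notin> Q" using Q(1) by (auto simp: pos_block_def)
  moreover from this have "Extra \<in> Q" using one_sided_zero_sum_empty[OF sub Q(3)] Q(2) by blast
  ultimately show "pos_block \<subseteq> Q"
    using unbalanced_complement[OF sub Q(3)] by (auto simp: pos_block_def)
qed (auto simp: pos_block_def)

lemma minimal_neg_block: "minimal_zero_sum_on ns val neg_block"
proof (rule minimal_zero_sum_onI)
  have "Coextra \<in> neg_block" "Extra \<notin> neg_block" "finite neg_block"
    by (auto simp: neg_block_def)
  moreover have "{t. Neg t \<in> neg_block \<and> colour t = i} = {t. t < K \<and> colour t = i}"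
    "card {t. Pos t \<in> neg_block \<and> colour t = i} = 0" for i
    by (auto simp: neg_block_def image_iff)
  ultimately show "zero_sum_on ns val neg_block" by (simp add: zero_sum_on_iff)
  fix Q assume Q: "Q \<subseteq> neg_block" "Q \<noteq> {}" "zero_sum_on ns val Q"
  have sub: "Q \<subseteq> labels" using Q(1) by (auto simp: neg_block_def labels_def)
  have "Extra \<notin> Q" "\<forall>t. Pos t \<notin> Q" using Q(1) by (auto simp: neg_block_def)
  moreover from this have "Coextra \<in> Q" using one_sided_zero_sum_empty[OF sub Q(3)] Q(2) by blast
  ultimately show "neg_block \<subseteq> Q"
    using unbalanced_complement[OF sub Q(3)] by (auto simp: neg_block_def)
qed (auto simp: neg_block_def)

lemma block_without_extras:
  assumes "minimal_zero_sum_on ns val Q" "Q \<subseteq> labels" "Extra \<notin> Q" "Coextra \<notin> Q"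
  shows "card Q = 2"
proof -
  obtain t where t: "t < K" "Pos t \<in> Q \<or> Neg t \<in> Q"
    using minimal_zero_sum_onD(2)[OF assms(1)] assms(2-4) by (auto simp: labels_def)
  have "npos (colour t) Q = nneg (colour t) Q"
    using balanced_counts[OF assms(2) minimal_zero_sum_onD(3)[OF assms(1)] _ colour_less[OF t(1)]] assms(3,4)
    by simp
  then have "0 < npos (colour t) Q" "0 < nneg (colour t) Q"
    using t(2) npos_pos[OF assms(2)] nneg_pos[OF assms(2)] by fastforce+
  then obtain p q where pq: "Pos p \<in> Q" "Neg q \<in> Q" "colour p = colour t" "colour q = colour t"
    by (auto simp: card_gt_0_iff)
  have "p < K" using pq(1) assms(2) by (auto simp: labels_def)
  then have "Q = {Pos p, Neg q}"
    using minimal_zero_sum_on_eq_doubleton[OF assms(1) pq(1,2)] pq(3,4)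
      minimal_zero_sum_onD(3)[OF minimal_pair] by simp
  then show ?thesis by simp
qed

lemma card_labels: "card labels = 2 * K + 2"
proof -
  have "{t. Pos t \<in> labels} = {..<K}" "{t. Neg t \<in> labels} = {..<K}" "Extra \<in> labels" "Coextra \<in> labels"
    by (auto simp: labels_def)
  then show ?thesis using card_over_labels[OF labels_finite] by simp
qed

lemma unbalanced_blocks_cover:
  assumes "QE \<subseteq> labels" "QC \<subseteq> labels" "zero_sum_on ns val QE" "zero_sum_on ns val QC"
    and "QE \<inter> QC = {}" "Extra \<in> QE" "Coextra \<in> QC"
  shows "labels - QE = QC"
proof
  have E: "Pos t \<in> QE \<longleftrightarrow> Neg t \<notin> QE" if "t < K" for t
    using unbalanced_complement[OF assms(1,3) _ that] assms(5-7) by blast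
  have C: "Pos t \<in> QC \<longleftrightarrow> Neg t \<notin> QC" if "t < K" for t
    using unbalanced_complement[OF assms(2,4) _ that] assms(5-7) by blast
  show "QC \<subseteq> labels - QE" using assms(2,5) by blast
  show "labels - QE \<subseteq> QC"
  proof
    fix l assume l: "l \<in> labels - QE"
    then consider (pos) t where "t < K" "l = Pos t" | (neg) t where "t < K" "l = Neg t"
      | (coextra) "l = Coextra"
      using assms(6) by (auto simp: labels_def)
    then show "l \<in> QC"
    proof cases
      case (pos t)
      then show ?thesis using l E[of t] C[of t] assms(5) by blast
    next
      case (neg t)
      then show ?thesis using l E[of t] C[of t] assms(5) by blast
    qed (use assms(7) in simp)
  qed
qed

lemma card_atom_partition:
  assumes "P \<in> atom_partitions ns val labels"
  shows "card P = 2 \<or> card P = K + 1"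
proof -
  have partition: "partition_on labels P" and minimal: "\<And>Q. Q \<in> P \<Longrightarrow> minimal_zero_sum_on ns val Q"
    using assms unfolding atom_partitions_def by blast+
  have sub: "Q \<subseteq> labels" if "Q \<in> P" for Q using partition_onD1[OF partition] that by blast
  have disj: "Q \<inter> Q' = {}" if "Q \<in> P" "Q' \<in> P" "Q \<noteq> Q'" for Q Q'
    using partition_onD2[OF partition] that by (auto simp: pairwise_def disjnt_def)
  obtain QE where QE: "QE \<in> P" "Extra \<in> QE"
    using partition_onD1[OF partition] unfolding labels_def by blast
  obtain QC where QC: "QC \<in> P" "Coextra \<in> QC"
    using partition_onD1[OF partition] unfolding labels_def by blast
  show ?thesis
  proof (cases "QC = QE")
    case True
    then have "QE = {Extra, Coextra}"
      using minimal_zero_sum_on_eq_doubleton[OF minimal[OF QE(1)] QE(2)] QC(2)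
        minimal_zero_sum_onD(3)[OF minimal_extra_pair] by simp
    moreover have "card Q = 2" if "Q \<in> P" "Q \<noteq> QE" for Q
      using block_without_extras[OF minimal[OF that(1)] sub[OF that(1)]] disj[OF that(1) QE(1) that(2)]
        \<open>QE = {Extra, Coextra}\<close> by blast
    then have "card labels = card QE + 2 * (card P - 1)"
      using card_partition_on_pairs[OF partition labels_finite QE(1)] by blast
    moreover have "card P \<noteq> 0"
      using QE(1) finite_elements[OF labels_finite partition] by auto
    ultimately have "card P = K + 1" using card_labels by simp
    then show ?thesis ..
  next
    case False
    then have "labels - QE = QC"
      using unbalanced_blocks_cover[OF sub[OF QE(1)] sub[OF QC(1)]] minimal_zero_sum_onD(3)[OF minimal]
        disj[OF QE(1) QC(1)] QE QC by blast
    then show ?thesis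
      using card_atom_partition_complement[OF assms QE(1)] minimal[OF QC(1)] by simp
  qed
qed

lemma atom_partition_cards: "card ` atom_partitions ns val labels = {2, K + 1}"
proof (intro equalityI subsetI)
  show "k \<in> {2, K + 1}" if "k \<in> card ` atom_partitions ns val labels" for k
    using that card_atom_partition by blast
  have "labels - pos_block = neg_block" "pos_block \<subseteq> labels"
    by (auto simp: labels_def pos_block_def neg_block_def)
  then have "{pos_block, neg_block} \<in> atom_partitions ns val labels" "card {pos_block, neg_block} = 2"
    using atom_partition_complement[of pos_block labels] minimal_pos_block minimal_neg_block by auto
  then have two: "2 \<in> card ` atom_partitions ns val labels"
    by (rule rev_image_eqI[OF _ sym])
  let ?P = "insert {Extra, Coextra} ((\<lambda>t. {Pos t, Neg t}) ` {..<K})"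
  have "labels = {Extra, Coextra} \<union> Pos ` {..<K} \<union> Neg ` {..<K}"
    "{Extra, Coextra} \<inter> (Pos ` {..<K} \<union> Neg ` {..<K}) = {}"
    by (auto simp: labels_def)
  then have "?P \<in> atom_partitions ns val labels" "card ?P = K + 1"
    using atom_partition_insert_pairs[OF minimal_extra_pair minimal_pair[OF refl]] by simp_all
  then have "K + 1 \<in> card ` atom_partitions ns val labels"
    by (rule rev_image_eqI[OF _ sym])
  with two show "k \<in> card ` atom_partitions ns val labels" if "k \<in> {2, K + 1}" for k
    using that by blast
qed

theorem distance_in_DeltaG: "K - 1 \<in> DeltaG ns"
  using two_lengths_imp_DeltaG[OF labels_finite atom_partition_cards] K_ge_2 by simp

end

lemma colouring_witness_exists:
  assumes "\<forall>i<length ns. 0 < ns ! i" "2 \<le> K" "K \<le> (\<Sum>i<length ns. ns ! i div 2)"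
  obtains colour where "colouring_witness ns K colour"
proof -
  obtain colour where "\<And>t. t < K \<Longrightarrow> colour t < length ns"
    and "\<And>i. card {t. t < K \<and> colour t = i} \<le> ns ! i div 2"
    using exists_colouring[OF assms(3)] by blast
  with assms(1,2) have "colouring_witness ns K colour"
    by unfold_locales (auto simp: less_eq_div_iff_mult_less_eq mult.commute)
  then show thesis ..
qed

theorem lemma5p4:
  fixes ns :: "nat list"
  assumes "\<forall>i<length ns. 1 < ns ! i"
    and "\<forall>i. Suc i < length ns \<longrightarrow> ns ! i dvd ns ! Suc i"
    and "prod_list ns \<ge> 3"
  shows "{1 .. last ns - 2} \<union> {1 .. (\<Sum>i<length ns. ns ! i div 2) - 1} \<subseteq> DeltaG ns"
proof
  have pos: "\<forall>i<length ns. 0 < ns ! i" using assms(1) by auto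
  fix d assume "d \<in> {1 .. last ns - 2} \<union> {1 .. (\<Sum>i<length ns. ns ! i div 2) - 1}"
  then show "d \<in> DeltaG ns"
  proof
    assume "d \<in> {1 .. last ns - 2}"
    moreover have "ns \<noteq> []" using assms(3) by auto
    ultimately have "cyclic_witness ns (d + 1)"
      using pos by unfold_locales auto
    then show ?thesis using cyclic_witness.distance_in_DeltaG by fastforce
  next
    assume "d \<in> {1 .. (\<Sum>i<length ns. ns ! i div 2) - 1}"
    then have "2 \<le> d + 1" "d + 1 \<le> (\<Sum>i<length ns. ns ! i div 2)" by auto
    then obtain colour where "colouring_witness ns (d + 1) colour"
      by (rule colouring_witness_exists[OF pos])
    then show ?thesis using colouring_witness.distance_in_DeltaG by fastforce
  qed
qed

end
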